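(* Let $M\in\mathbb R_{>0}^{\mathbb N}$ and let $U\subseteq\mathbb R^p$, $V\subseteq\mathbb R^q$, $W\subseteq\mathbb R^r$ be open. (1) If $g\in\mathcal E^{(M)}(U,V)$ and $f\in\mathcal E^{(M)}(V,W)$ then $f\circ g\in\mathcal E^{(M^\circ)}(U,W)$; likewise, if $g\in\mathcal E^{\{M\}}(U,V)$ and $f\in\mathcal E^{\{M\}}(V,W)$ then $f\circ g\in\mathcal E^{\{M^\circ\}}(U,W)$. (2) If $M$ has the (FdB)-property, then $\mathcal E^{(M)}$ and $\mathcal E^{\{M\}}$ are stable under composition.
   Context: For $N\in\mathbb R_{>0}^{\mathbb N}$, open $U\subseteq\mathbb R^n$, compact $K$, $\rho>0$: $\|f\|^N_{K,\rho}:=\sup\{\|f^{(k)}(x)\|/(k!\rho^kN_k):x\in K,k\in\mathbb N\}$ ($f^{(k)}$ the $k$-th Fréchet derivative). $\mathcal E^{(N)}(U,V)$: smooth $f:U\to V$ with $\|f\|^N_{K,\rho}<\infty$ for all compact $K\subseteq U$ and all $\rho>0$; $\mathcal E^{\{N\}}(U,V)$: for every compact $K$ some $\rho>0$. $M^\circ_k:=\max\{M_jM_{\alpha_1}\cdots M_{\alpha_j}:\alpha_i\in\mathbb N_{>0},\alpha_1+\dots+\alpha_j=k\}$ for $k\ge1$, $M^\circ_0:=1$. $M$ has the (FdB)-property if $\exists C>0$ with $M_jM_{\alpha_1}\cdots M_{\alpha_j}\le C^kM_k$ for all $\alpha_i\in\mathbb N_{>0}$, $\alpha_1+\dots+\alpha_j=k$.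 A class is stable under composition if $g\in\mathcal E(U,V),f\in\mathcal E(V,W)\Rightarrow f\circ g\in\mathcal E(U,W)$ for all open $U,V,W$ in Euclidean spaces. *)

theory Defs
  imports "HOL-Analysis.Analysis"
begin

text \<open>Iterated Frechet derivative evaluated on a list of directions:
  higher_deriv k f x [v1,...,vk] = f^(k)(x)(v1,...,vk).\<close>
fun higher_deriv :: "nat \<Rightarrow> ('a::real_normed_vector \<Rightarrow> 'b::real_normed_vector) \<Rightarrow> 'a \<Rightarrow> 'a list \<Rightarrow> 'b" where
  "higher_deriv 0 f x vs = f x"
| "higher_deriv (Suc k) f x vs =
     frechet_derivative (\<lambda>y. higher_deriv k f y (tl vs)) (at x) (hd vs)"

definition smooth_on_set :: "'a::real_normed_vector set \<Rightarrow> ('a \<Rightarrow> 'b::real_normed_vector) \<Rightarrow> bool" where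
  "smooth_on_set U f \<longleftrightarrow>
     (\<forall>k vs x. length vs = k \<and> x \<in> U \<longrightarrow> (\<lambda>y. higher_deriv k f y vs) differentiable (at x))"

definition deriv_norm :: "nat \<Rightarrow> ('a::real_normed_vector \<Rightarrow> 'b::real_normed_vector) \<Rightarrow> 'a \<Rightarrow> real" where
  "deriv_norm k f x = Sup {norm (higher_deriv k f x vs) | vs. length vs = k \<and> (\<forall>v\<in>set vs. norm v \<le> 1)}"

definition seminorm_finite :: "(nat \<Rightarrow> real) \<Rightarrow> 'a::real_normed_vector set \<Rightarrow> real \<Rightarrow> ('a \<Rightarrow> 'b::real_normed_vector) \<Rightarrow> bool" where
  "seminorm_finite N K \<rho> f \<longleftrightarrow>
     bdd_above {deriv_norm k f x / (fact k * \<rho> ^ k * N k) | x k. x \<in> K}"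

definition beurling_class :: "(nat \<Rightarrow> real) \<Rightarrow> 'a::euclidean_space set \<Rightarrow> 'b::euclidean_space set \<Rightarrow> ('a \<Rightarrow> 'b) \<Rightarrow> bool" where
  "beurling_class N U V f \<longleftrightarrow> f ` U \<subseteq> V \<and> smooth_on_set U f \<and>
     (\<forall>K. compact K \<and> K \<subseteq> U \<longrightarrow> (\<forall>\<rho>>0. seminorm_finite N K \<rho> f))"

definition roumieu_class :: "(nat \<Rightarrow> real) \<Rightarrow> 'a::euclidean_space set \<Rightarrow> 'b::euclidean_space set \<Rightarrow> ('a \<Rightarrow> 'b) \<Rightarrow> bool" where
  "roumieu_class N U V f \<longleftrightarrow> f ` U \<subseteq> V \<and> smooth_on_set U f \<and>
     (\<forall>K. compact K \<and> K \<subseteq> U \<longrightarrow> (\<exists>\<rho>>0. seminorm_finite N K \<rho> f))"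

definition comp_seq :: "(nat \<Rightarrow> real) \<Rightarrow> nat \<Rightarrow> real" where
  "comp_seq M k = (if k = 0 then 1 else
     Max {M (length as) * prod_list (map M as) | as. (\<forall>a\<in>set as. 0 < a) \<and> sum_list as = k})"

definition FdB_property :: "(nat \<Rightarrow> real) \<Rightarrow> bool" where
  "FdB_property M \<longleftrightarrow> (\<exists>C>0. \<forall>k as. (\<forall>a\<in>set as. 0 < a) \<and> sum_list as = k \<longrightarrow>
      M (length as) * prod_list (map M as) \<le> C ^ k * M k)"

end

theory Submission
  imports Defs
begin

text \<open>
  Faa di Bruno's formula writes \<open>(f \<circ> g)\<^sup>(\<^sup>k\<^sup>)(x)(v\<^sub>1, \<dots>, v\<^sub>k)\<close> as a sum over the
  partitions \<open>\<pi>\<close> of \<open>{1, \<dots>, k}\<close>: the term of \<open>\<pi>\<close> is \<open>f\<^sup>(\<^sup>j\<^sup>)(g x)\<close>, \<open>j = |\<pi>|\<close>, applied to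
  the vectors \<open>g\<^sup>(\<^sup>|\<^sup>I\<^sup>|\<^sup>)(x)(v\<^sub>I)\<close> for the blocks \<open>I \<in> \<pi>\<close>. If \<open>\<parallel>g\<^sup>(\<^sup>a\<^sup>)\<parallel> \<le> B a! \<tau>\<^sup>a M\<^sub>a\<close> and
  \<open>\<parallel>f\<^sup>(\<^sup>j\<^sup>)\<parallel> \<le> A j! \<sigma>\<^sup>j M\<^sub>j\<close>, that term is at most
  \<open>A \<tau>\<^sup>k (\<sigma> B)\<^sup>j \<cdot> j! \<Prod>\<^sub>I |I|! \<cdot> M\<^sub>j \<Prod>\<^sub>I M\<^sub>|\<^sub>I\<^sub>|\<close>. The last factor is at most \<open>M\<^sup>\<circ>\<^sub>k\<close> by
  definition, and the weights \<open>j! \<Prod>\<^sub>I |I|!\<close> sum to at most \<open>3\<^sup>k k!\<close> over all partitions, by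
  induction on \<open>k\<close>. Hence \<open>f \<circ> g\<close> satisfies the \<open>M\<^sup>\<circ>\<close>-estimate with constant
  \<open>3 max 1 (\<sigma> B) \<tau>\<close>. In the Beurling case \<open>\<tau>\<close> is arbitrary and \<open>\<sigma> = 1/B\<close> may be chosen, so
  this constant is arbitrarily small. The (FdB)-property gives \<open>M\<^sup>\<circ>\<^sub>k \<le> c C\<^sup>k M\<^sub>k\<close>, which only
  rescales the constant.
\<close>

fun multilinear :: "nat \<Rightarrow> ('a::real_normed_vector list \<Rightarrow> 'b::real_normed_vector) \<Rightarrow> bool" where
  "multilinear 0 F = True"
| "multilinear (Suc j) F \<longleftrightarrow>
     (\<forall>ws. length ws = j \<longrightarrow> linear (\<lambda>w. F (w # ws))) \<and> (\<forall>w. multilinear j (\<lambda>ws. F (w # ws)))"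

lemma linear_sum_Basis:
  fixes h :: "'a::euclidean_space \<Rightarrow> 'b::real_normed_vector"
  assumes "linear h"
  shows "h w = (\<Sum>b\<in>Basis. (w \<bullet> b) *\<^sub>R h b)"
proof -
  have "h w = h (\<Sum>b\<in>Basis. (w \<bullet> b) *\<^sub>R b)" by (simp add: euclidean_representation)
  also have "\<dots> = (\<Sum>b\<in>Basis. (w \<bullet> b) *\<^sub>R h b)"
    using assms by (simp add: linear_sum linear_scale)
  finally show ?thesis .
qed

lemma multilinear_bounded:
  fixes F :: "'a::euclidean_space list \<Rightarrow> 'b::real_normed_vector"
  assumes "multilinear j F"
  shows "\<exists>K. \<forall>ws. length ws = j \<and> (\<forall>w\<in>set ws. norm w \<le> 1) \<longrightarrow> norm (F ws) \<le> K"
  using assms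
proof (induction j arbitrary: F)
  case 0
  show ?case by (rule exI[of _ "norm (F [])"]) auto
next
  case (Suc j)
  then have "\<forall>b. \<exists>K. \<forall>ws. length ws = j \<and> (\<forall>w\<in>set ws. norm w \<le> 1) \<longrightarrow> norm (F (b # ws)) \<le> K"
    by auto
  then obtain K where K: "\<And>b ws. length ws = j \<Longrightarrow> \<forall>w\<in>set ws. norm w \<le> 1 \<Longrightarrow> norm (F (b # ws)) \<le> K b"
    by metis
  show ?case
  proof (rule exI[of _ "\<Sum>b\<in>Basis. K b"], intro allI impI)
    fix ws :: "'a list" assume ws: "length ws = Suc j \<and> (\<forall>w\<in>set ws. norm w \<le> 1)"
    then obtain w ws' where ws_eq: "ws = w # ws'" by (cases ws) auto
    have lin: "linear (\<lambda>w. F (w # ws'))" using Suc.prems ws ws_eq by auto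
    have "norm (F ws) = norm (\<Sum>b\<in>Basis. (w \<bullet> b) *\<^sub>R F (b # ws'))"
      using ws_eq linear_sum_Basis[OF lin, of w] by simp
    also have "\<dots> \<le> (\<Sum>b\<in>Basis. norm ((w \<bullet> b) *\<^sub>R F (b # ws')))" by (rule norm_sum)
    also have "\<dots> \<le> (\<Sum>b\<in>Basis. K b)"
    proof (rule sum_mono)
      fix b :: 'a assume b: "b \<in> Basis"
      have "\<bar>w \<bullet> b\<bar> \<le> 1" using Basis_le_norm[OF b, of w] ws ws_eq by auto
      moreover have "norm (F (b # ws')) \<le> K b" using K[of ws' b] ws ws_eq by auto
      ultimately show "norm ((w \<bullet> b) *\<^sub>R F (b # ws')) \<le> K b"
        by (simp add: mult_le_one) (metis abs_ge_zero mult_left_le_one_le norm_ge_zero order.trans)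
    qed
    finally show "norm (F ws) \<le> (\<Sum>b\<in>Basis. K b)" .
  qed
qed

lemma multilinear_norm_le:
  fixes F :: "'a::real_normed_vector list \<Rightarrow> 'b::real_normed_vector"
  assumes "multilinear j F"
    and "\<And>ws. length ws = j \<Longrightarrow> \<forall>w\<in>set ws. norm w \<le> 1 \<Longrightarrow> norm (F ws) \<le> D"
    and "length ws = j"
  shows "norm (F ws) \<le> D * prod_list (map norm ws)"
  using assms
proof (induction j arbitrary: F ws)
  case 0
  then show ?case by auto
next
  case (Suc j)
  then obtain w ws' where ws: "ws = w # ws'" by (cases ws) auto
  have lin: "linear (\<lambda>w. F (w # ws'))" using Suc.prems ws by auto
  show ?case
  proof (cases "w = 0")
    case True
    then show ?thesis using ws linear_0[OF lin] by simp
  next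
    case False
    define u where "u = w /\<^sub>R norm w"
    have norm_u: "norm u = 1" using False by (simp add: u_def)
    have "norm (F (u # ws')) \<le> D * prod_list (map norm ws')"
    proof (rule Suc.IH)
      show "multilinear j (\<lambda>ws. F (u # ws))" using Suc.prems by simp
    qed (use Suc.prems(2)[of "u # _"] norm_u ws Suc.prems(3) in auto)
    moreover have "F (w # ws') = norm w *\<^sub>R F (u # ws')"
      using linear_scale[OF lin, of "norm w" u] False by (simp add: u_def)
    ultimately show ?thesis using ws
      by (simp add: mult_left_mono) (metis mult.left_commute mult_left_mono norm_ge_zero)
  qed
qed

lemma multilinear_frechet_derivative:
  fixes H :: "'a::real_normed_vector \<Rightarrow> 'b::real_normed_vector list \<Rightarrow> 'c::real_normed_vector"
  assumes V: "open V" "y \<in> V" and "\<forall>z\<in>V. multilinear j (H z)"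
    and "\<forall>ws. length ws = j \<longrightarrow> (\<lambda>z. H z ws) differentiable (at y)"
  shows "multilinear j (\<lambda>ws. frechet_derivative (\<lambda>z. H z ws) (at y) v)"
  using assms(3,4)
proof (induction j arbitrary: H)
  case 0
  then show ?case by simp
next
  case (Suc j)
  have "linear (\<lambda>w. frechet_derivative (\<lambda>z. H z (w # ws)) (at y) v)" if len: "length ws = j" for ws
  proof -
    let ?D = "\<lambda>w. frechet_derivative (\<lambda>z. H z (w # ws)) (at y)"
    have D: "((\<lambda>z. H z (w # ws)) has_derivative ?D w) (at y)" for w
      using Suc.prems(2) len frechet_derivative_works by (metis length_Cons)
    have L: "linear (\<lambda>w. H z (w # ws))" if "z \<in> V" for z using Suc.prems(1) that len by auto
    show ?thesis
    proof (rule linearI)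
      fix b1 b2
      have "((\<lambda>z. H z (b1 # ws) + H z (b2 # ws)) has_derivative (\<lambda>h. ?D b1 h + ?D b2 h)) (at y)"
        by (intro has_derivative_add D)
      then have "((\<lambda>z. H z ((b1 + b2) # ws)) has_derivative (\<lambda>h. ?D b1 h + ?D b2 h)) (at y)"
        by (rule has_derivative_transform_within_open[OF _ V]) (simp add: linear_add[OF L])
      from has_derivative_unique[OF D this] show "?D (b1 + b2) v = ?D b1 v + ?D b2 v"
        by metis
    next
      fix r b
      have "((\<lambda>z. r *\<^sub>R H z (b # ws)) has_derivative (\<lambda>h. r *\<^sub>R ?D b h)) (at y)"
        by (intro has_derivative_scaleR_right D)
      then have "((\<lambda>z. H z ((r *\<^sub>R b) # ws)) has_derivative (\<lambda>h. r *\<^sub>R ?D b h)) (at y)"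
        by (rule has_derivative_transform_within_open[OF _ V]) (simp add: linear_scale[OF L])
      from has_derivative_unique[OF D this] show "?D (r *\<^sub>R b) v = r *\<^sub>R ?D b v"
        by metis
    qed
  qed
  moreover have "multilinear j (\<lambda>ws. frechet_derivative (\<lambda>z. H z (w # ws)) (at y) v)" for w
    using Suc.IH[of "\<lambda>z ws. H z (w # ws)"] Suc.prems by auto
  ultimately show ?case by simp
qed

lemma multilinear_higher_deriv:
  assumes "smooth_on_set V f" "open V" "y \<in> V"
  shows "multilinear k (higher_deriv k f y)"
  using assms(3)
proof (induction k arbitrary: y)
  case 0
  then show ?case by simp
next
  case (Suc k)
  have "linear (\<lambda>w. higher_deriv (Suc k) f y (w # ws))" if "length ws = k" for ws
  proof -
    have "(\<lambda>z. higher_deriv k f z ws) differentiable (at y)"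
      using assms(1) Suc.prems that unfolding smooth_on_set_def by blast
    then show ?thesis using frechet_derivative_works has_derivative_linear by simp blast
  qed
  moreover have "multilinear k (\<lambda>ws. frechet_derivative (\<lambda>z. higher_deriv k f z ws) (at y) w)" for w
    using Suc assms(1,2) unfolding smooth_on_set_def
    by (intro multilinear_frechet_derivative[OF assms(2) Suc.prems]) auto
  ultimately show ?case by simp
qed

lemma has_derivative_smooth_on_set:
  assumes "smooth_on_set U f" "x \<in> U"
  shows "((\<lambda>y. higher_deriv (length vs) f y vs) has_derivative
           frechet_derivative (\<lambda>y. higher_deriv (length vs) f y vs) (at x)) (at x)"
  using assms unfolding smooth_on_set_def frechet_derivative_works by simp

lemma smooth_on_set_imp_continuous_on:
  assumes "smooth_on_set U g"
  shows "continuous_on U g"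
proof (rule continuous_at_imp_continuous_on, rule ballI)
  fix x assume "x \<in> U"
  from has_derivative_smooth_on_set[OF assms this, of "[]"]
  show "isCont g x" by (simp add: has_derivative_continuous)
qed

section \<open>Faa di Bruno's formula\<close>

lemma multilinear_Cons_sum_Basis:
  fixes F :: "'a::euclidean_space list \<Rightarrow> 'b::real_normed_vector"
  assumes "multilinear (Suc n) F" "length s = n"
  shows "F (c # s) = (\<Sum>b\<in>Basis. (c \<bullet> b) *\<^sub>R F (b # s))"
  using assms linear_sum_Basis[of "\<lambda>c. F (c # s)" c] by auto

lemma has_derivative_linear_first_arg:
  fixes \<Phi> :: "'b::euclidean_space \<Rightarrow> 'b list \<Rightarrow> 'c::real_normed_vector"
    and g w :: "'a::real_normed_vector \<Rightarrow> 'b"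
  assumes V: "open V" and g: "(g has_derivative g') (at x)" and gx: "g x \<in> V"
    and expand: "\<And>y c s. y \<in> V \<Longrightarrow> length s = n \<Longrightarrow> \<Phi> y (c # s) = (\<Sum>b\<in>Basis. (c \<bullet> b) *\<^sub>R \<Phi> y (b # s))"
    and len_r: "\<And>x. length (r x) = n"
    and w: "(w has_derivative w') (at x)"
    and G: "\<And>b. ((\<lambda>x. \<Phi> (g x) (b # r x)) has_derivative G b) (at x)"
  shows "((\<lambda>x. \<Phi> (g x) (w x # r x)) has_derivative
           (\<lambda>v. (\<Sum>b\<in>Basis. (w x \<bullet> b) *\<^sub>R G b v) + \<Phi> (g x) (w' v # r x))) (at x)"
proof -
  have "((\<lambda>x. \<Sum>b\<in>Basis. (w x \<bullet> b) *\<^sub>R \<Phi> (g x) (b # r x)) has_derivative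
      (\<lambda>v. \<Sum>b\<in>Basis. (w x \<bullet> b) *\<^sub>R G b v + (w' v \<bullet> b) *\<^sub>R \<Phi> (g x) (b # r x))) (at x)"
    by (intro has_derivative_sum has_derivative_scaleR G has_derivative_inner_left w)
  moreover have "\<forall>\<^sub>F x' in at x. (\<Sum>b\<in>Basis. (w x' \<bullet> b) *\<^sub>R \<Phi> (g x') (b # r x')) = \<Phi> (g x') (w x' # r x')"
  proof -
    have "(g \<longlongrightarrow> g x) (at x)"
      using has_derivative_continuous[OF g] by (simp add: continuous_at)
    from topological_tendstoD[OF this V gx] show ?thesis
      by eventually_elim (rule expand[symmetric]; simp add: len_r)
  qed
  ultimately have "((\<lambda>x. \<Phi> (g x) (w x # r x)) has_derivative
      (\<lambda>v. \<Sum>b\<in>Basis. (w x \<bullet> b) *\<^sub>R G b v + (w' v \<bullet> b) *\<^sub>R \<Phi> (g x) (b # r x))) (at x)"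
    by (rule has_derivative_transform_eventually) (simp_all add: expand[OF gx len_r, symmetric])
  then show ?thesis
    by (simp add: sum.distrib expand[OF gx len_r, symmetric])
qed

lemma has_derivative_multilinear_comp:
  fixes \<Phi> :: "'b::euclidean_space \<Rightarrow> 'b list \<Rightarrow> 'c::real_normed_vector"
    and g :: "'a::real_normed_vector \<Rightarrow> 'b"
    and wl :: "(('a \<Rightarrow> 'b) \<times> ('a \<Rightarrow> 'b)) list"
  assumes V: "open V" and g: "(g has_derivative g') (at x)" and gx: "g x \<in> V"
    and "\<forall>y\<in>V. multilinear (length wl) (\<Phi> y)"
    and "\<forall>y\<in>V. \<forall>ws. length ws = length wl \<longrightarrow> (\<lambda>z. \<Phi> z ws) differentiable (at y)"
    and "\<forall>i<length wl. (fst (wl!i) has_derivative snd (wl!i)) (at x)"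
  shows "((\<lambda>x. \<Phi> (g x) (map (\<lambda>w. fst w x) wl)) has_derivative
     (\<lambda>v. frechet_derivative (\<lambda>z. \<Phi> z (map (\<lambda>w. fst w x) wl)) (at (g x)) (g' v)
        + (\<Sum>i<length wl. \<Phi> (g x) ((map (\<lambda>w. fst w x) wl)[i := snd (wl!i) v])))) (at x)"
  using assms(4-6)
proof (induction wl arbitrary: \<Phi>)
  case Nil
  then have "((\<lambda>z. \<Phi> z []) has_derivative frechet_derivative (\<lambda>z. \<Phi> z []) (at (g x))) (at (g x))"
    using gx frechet_derivative_works by auto
  from has_derivative_compose[OF g this] show ?case by simp
next
  case (Cons wp wl)
  obtain w w' where wp: "wp = (w, w')" by (cases wp)
  define r where "r = (\<lambda>x. map (\<lambda>w. fst w x) wl)"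
  define n where "n = length wl"
  let ?D = "\<lambda>s. frechet_derivative (\<lambda>z. \<Phi> z s) (at (g x))"
  have len_r: "length (r x') = n" for x' by (simp add: r_def n_def)
  have expand: "\<Phi> y (c # s) = (\<Sum>b\<in>Basis. (c \<bullet> b) *\<^sub>R \<Phi> y (b # s))" if "y \<in> V" "length s = n" for y c s
    using Cons.prems(1) that by (intro multilinear_Cons_sum_Basis) (auto simp: n_def)
  have "multilinear (Suc n) (\<lambda>ws. frechet_derivative (\<lambda>z. \<Phi> z ws) (at (g x)) u)" for u
    using Cons.prems(1,2) gx by (intro multilinear_frechet_derivative[OF V gx]) (auto simp: n_def)
  then have expand_D: "?D (c # s) u = (\<Sum>b\<in>Basis. (c \<bullet> b) *\<^sub>R ?D (b # s) u)" if "length s = n" for c s u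
    using that by (rule multilinear_Cons_sum_Basis)
  have "\<forall>i<length wl. (fst (wl!i) has_derivative snd (wl!i)) (at x)"
    using Cons.prems(3) by (metis Suc_less_eq length_Cons nth_Cons_Suc)
  then have "((\<lambda>x. \<Phi> (g x) (b # r x)) has_derivative
     (\<lambda>v. ?D (b # r x) (g' v) + (\<Sum>i<n. \<Phi> (g x) (b # (r x)[i := snd (wl!i) v])))) (at x)" for b
    using Cons.IH[of "\<lambda>y s. \<Phi> y (b # s)"] Cons.prems(1,2) by (auto simp: r_def n_def)
  moreover have "(w has_derivative w') (at x)" using Cons.prems(3) wp by force
  ultimately have "((\<lambda>x. \<Phi> (g x) (w x # r x)) has_derivative (\<lambda>v.
      (\<Sum>b\<in>Basis. (w x \<bullet> b) *\<^sub>R (?D (b # r x) (g' v) + (\<Sum>i<n. \<Phi> (g x) (b # (r x)[i := snd (wl!i) v]))))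
      + \<Phi> (g x) (w' v # r x))) (at x)"
    by (intro has_derivative_linear_first_arg[OF V g gx expand len_r])
  moreover have "(\<Sum>b\<in>Basis. (w x \<bullet> b) *\<^sub>R (?D (b # r x) (g' v) + (\<Sum>i<n. \<Phi> (g x) (b # (r x)[i := snd (wl!i) v]))))
      + \<Phi> (g x) (w' v # r x)
      = ?D (w x # r x) (g' v) + (\<Sum>i<Suc n. \<Phi> (g x) ((w x # r x)[i := snd ((wp # wl)!i) v]))" for v
  proof -
    have "(\<Sum>b\<in>Basis. (w x \<bullet> b) *\<^sub>R (\<Sum>i<n. \<Phi> (g x) (b # (r x)[i := snd (wl!i) v])))
        = (\<Sum>i<n. \<Phi> (g x) (w x # (r x)[i := snd (wl!i) v]))"
      unfolding scaleR_sum_right by (subst sum.swap) (simp add: expand[OF gx, symmetric] len_r)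
    moreover have "(\<Sum>i<Suc n. \<Phi> (g x) ((w x # r x)[i := snd ((wp # wl)!i) v]))
        = \<Phi> (g x) (w' v # r x) + (\<Sum>i<n. \<Phi> (g x) (w x # (r x)[i := snd (wl!i) v]))"
      unfolding sum.lessThan_Suc_shift by (simp add: wp)
    ultimately show ?thesis
      by (simp add: scaleR_add_right sum.distrib expand_D[OF len_r, symmetric])
  qed
  ultimately show ?case by (simp add: wp r_def n_def)
qed

text \<open>
  A partition of \<open>{0..<k}\<close> is a list of blocks, each block a list of indices. The
  partitions of \<open>{0..<Suc k}\<close> arise from those of \<open>{0..<k}\<close> by shifting all indices up
  and then adding \<open>0\<close> either as a new singleton block or to one of the existing blocks;
  this mirrors differentiating one more time in the product rule.
\<close>

definition extend_partition :: "nat list list \<Rightarrow> nat list list list" where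
  "extend_partition p =
     (let q = map (map Suc) p in ([0] # q) # map (\<lambda>i. q[i := 0 # q!i]) [0..<length q])"

fun fdb_partitions :: "nat \<Rightarrow> nat list list list" where
  "fdb_partitions 0 = [[]]"
| "fdb_partitions (Suc k) = concat (map extend_partition (fdb_partitions k))"

definition fdb_term ::
    "('b::real_normed_vector \<Rightarrow> 'c::real_normed_vector) \<Rightarrow> ('a::real_normed_vector \<Rightarrow> 'b) \<Rightarrow>
     nat list list \<Rightarrow> 'a \<Rightarrow> 'a list \<Rightarrow> 'c" where
  "fdb_term f g p x vs =
     higher_deriv (length p) f (g x) (map (\<lambda>I. higher_deriv (length I) g x (map ((!) vs) I)) p)"

lemma sum_list_map_concat: "sum_list (map f (concat xss)) = sum_list (map (\<lambda>xs. sum_list (map f xs)) xss)"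
  by (induction xss) auto

lemma has_derivative_sum_list:
  assumes "\<And>p. p \<in> set ps \<Longrightarrow> (F p has_derivative F' p) (at x)"
  shows "((\<lambda>y. sum_list (map (\<lambda>p. F p y) ps)) has_derivative (\<lambda>u. sum_list (map (\<lambda>p. F' p u) ps))) (at x)"
  using assms by (induction ps) (auto intro: has_derivative_add)

lemma has_derivative_fdb_term:
  fixes f :: "'b::euclidean_space \<Rightarrow> 'c::real_normed_vector" and g :: "'a::real_normed_vector \<Rightarrow> 'b"
  assumes sf: "smooth_on_set V f" and sg: "smooth_on_set U g" and V: "open V"
    and gU: "g ` U \<subseteq> V" and x: "x \<in> U"
  shows "((\<lambda>x. fdb_term f g p x vs) has_derivative
           (\<lambda>v. sum_list (map (\<lambda>p'. fdb_term f g p' x (v # vs)) (extend_partition p)))) (at x)"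
proof -
  define wl where "wl = map (\<lambda>I. (\<lambda>y. higher_deriv (length I) g y (map ((!) vs) I),
      frechet_derivative (\<lambda>y. higher_deriv (length I) g y (map ((!) vs) I)) (at x))) p"
  define j where "j = length p"
  have len_wl: "length wl = j" by (simp add: wl_def j_def)
  have gx: "g x \<in> V" using gU x by auto
  have args: "map (\<lambda>w. fst w y) wl = map (\<lambda>I. higher_deriv (length I) g y (map ((!) vs) I)) p" for y
    by (simp add: wl_def)
  have g: "(g has_derivative frechet_derivative g (at x)) (at x)"
    using has_derivative_smooth_on_set[OF sg x, of "[]"] by simp
  have "((\<lambda>x. higher_deriv j f (g x) (map (\<lambda>w. fst w x) wl)) has_derivative
     (\<lambda>v. frechet_derivative (\<lambda>z. higher_deriv j f z (map (\<lambda>w. fst w x) wl)) (at (g x)) (frechet_derivative g (at x) v)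
        + (\<Sum>i<length wl. higher_deriv j f (g x) ((map (\<lambda>w. fst w x) wl)[i := snd (wl!i) v])))) (at x)"
  proof (rule has_derivative_multilinear_comp[OF V g gx])
    show "\<forall>y\<in>V. multilinear (length wl) (higher_deriv j f y)"
      using multilinear_higher_deriv[OF sf V] len_wl by simp
    show "\<forall>y\<in>V. \<forall>ws. length ws = length wl \<longrightarrow> (\<lambda>z. higher_deriv j f z ws) differentiable (at y)"
      using sf unfolding len_wl smooth_on_set_def by blast
    show "\<forall>i<length wl. (fst (wl!i) has_derivative snd (wl!i)) (at x)"
      using has_derivative_smooth_on_set[OF sg x] by (simp add: wl_def) (metis length_map)
  qed
  moreover have "frechet_derivative (\<lambda>z. higher_deriv j f z (map (\<lambda>w. fst w x) wl)) (at (g x)) (frechet_derivative g (at x) v)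
        + (\<Sum>i<length wl. higher_deriv j f (g x) ((map (\<lambda>w. fst w x) wl)[i := snd (wl!i) v]))
      = sum_list (map (\<lambda>p'. fdb_term f g p' x (v # vs)) (extend_partition p))" for v
  proof -
    have "fdb_term f g ([0] # map (map Suc) p) x (v # vs) =
       frechet_derivative (\<lambda>z. higher_deriv j f z (map (\<lambda>w. fst w x) wl)) (at (g x)) (frechet_derivative g (at x) v)"
      by (simp add: fdb_term_def args j_def comp_def)
    moreover have "fdb_term f g ((map (map Suc) p)[i := 0 # (map (map Suc) p) ! i]) x (v # vs)
        = higher_deriv j f (g x) ((map (\<lambda>w. fst w x) wl)[i := snd (wl!i) v])" if "i < j" for i
      using that by (simp add: fdb_term_def args j_def comp_def map_update wl_def)
    ultimately show ?thesis
      by (simp add: extend_partition_def Let_def interv_sum_list_conv_sum_set_nat atLeast0LessThan len_wl j_def)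
  qed
  ultimately show ?thesis by (simp add: fdb_term_def args j_def)
qed

lemma has_derivative_higher_deriv_comp:
  fixes f :: "'b::euclidean_space \<Rightarrow> 'c::real_normed_vector" and g :: "'a::real_normed_vector \<Rightarrow> 'b"
  assumes sf: "smooth_on_set V f" and sg: "smooth_on_set U g" and U: "open U" and V: "open V"
    and gU: "g ` U \<subseteq> V" and x: "x \<in> U"
    and fdb: "\<forall>y\<in>U. higher_deriv k (f \<circ> g) y vs = sum_list (map (\<lambda>p. fdb_term f g p y vs) (fdb_partitions k))"
  shows "((\<lambda>y. higher_deriv k (f \<circ> g) y vs) has_derivative
     (\<lambda>u. sum_list (map (\<lambda>p. sum_list (map (\<lambda>p'. fdb_term f g p' x (u # vs)) (extend_partition p)))
                         (fdb_partitions k)))) (at x)"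
proof -
  have "((\<lambda>y. sum_list (map (\<lambda>p. fdb_term f g p y vs) (fdb_partitions k))) has_derivative
     (\<lambda>u. sum_list (map (\<lambda>p. sum_list (map (\<lambda>p'. fdb_term f g p' x (u # vs)) (extend_partition p)))
                         (fdb_partitions k)))) (at x)"
    by (rule has_derivative_sum_list) (rule has_derivative_fdb_term[OF sf sg V gU x])
  then show ?thesis
    by (rule has_derivative_transform_within_open[OF _ U x]) (simp add: fdb)
qed

theorem higher_deriv_comp:
  fixes f :: "'b::euclidean_space \<Rightarrow> 'c::real_normed_vector" and g :: "'a::real_normed_vector \<Rightarrow> 'b"
  assumes sf: "smooth_on_set V f" and sg: "smooth_on_set U g" and U: "open U" and V: "open V"
    and gU: "g ` U \<subseteq> V" and x: "x \<in> U" and vs: "length vs = k"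
  shows "higher_deriv k (f \<circ> g) x vs = sum_list (map (\<lambda>p. fdb_term f g p x vs) (fdb_partitions k))"
  using x vs
proof (induction k arbitrary: x vs)
  case 0
  then show ?case by (simp add: fdb_term_def)
next
  case (Suc k)
  then obtain v vs' where vs: "vs = v # vs'" and len: "length vs' = k" by (cases vs) auto
  have "\<forall>y\<in>U. higher_deriv k (f \<circ> g) y vs' = sum_list (map (\<lambda>p. fdb_term f g p y vs') (fdb_partitions k))"
    using Suc.IH len by blast
  note frechet_derivative_at[OF has_derivative_higher_deriv_comp[OF sf sg U V gU Suc.prems(1) this], symmetric]
  then show ?case
    unfolding vs higher_deriv.simps list.sel by (simp add: sum_list_map_concat o_def)
qed

lemma smooth_on_set_comp:
  fixes f :: "'b::euclidean_space \<Rightarrow> 'c::real_normed_vector" and g :: "'a::real_normed_vector \<Rightarrow> 'b"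
  assumes sf: "smooth_on_set V f" and sg: "smooth_on_set U g" and U: "open U" and V: "open V"
    and gU: "g ` U \<subseteq> V"
  shows "smooth_on_set U (f \<circ> g)"
  unfolding smooth_on_set_def differentiable_def
  using has_derivative_higher_deriv_comp[OF sf sg U V gU] higher_deriv_comp[OF sf sg U V gU] by blast

section \<open>Weighted count of the partitions\<close>

text \<open>The estimates never use that the blocks of a partition are disjoint, only this invariant.\<close>

definition index_blocks :: "nat \<Rightarrow> nat list list \<Rightarrow> bool" where
  "index_blocks k p \<longleftrightarrow> (\<forall>B\<in>set p. B \<noteq> [] \<and> (\<forall>i\<in>set B. i < k)) \<and> sum_list (map length p) = k"

definition partition_weight :: "nat list list \<Rightarrow> real" where
  "partition_weight p = fact (length p) * prod_list (map (\<lambda>I. fact (length I)) p)"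

lemma sum_list_update_Suc: "i < length xs \<Longrightarrow> sum_list (xs[i := Suc (xs!i)]) = Suc (sum_list xs)"
  by (induction xs arbitrary: i) (auto split: nat.split)

lemma prod_list_update:
  "i < length xs \<Longrightarrow> prod_list (xs[i := y]) * xs!i = prod_list xs * (y :: 'a::comm_monoid_mult)"
  by (induction xs arbitrary: i) (auto split: nat.split simp: algebra_simps)

lemma length_le_sum_list_length: "\<forall>B\<in>set p. B \<noteq> [] \<Longrightarrow> length p \<le> sum_list (map length p)"
proof (induction p)
  case (Cons B p)
  then show ?case by (cases B) auto
qed simp

lemma index_blocks_length_le: "index_blocks k p \<Longrightarrow> length p \<le> k"
  using length_le_sum_list_length[of p] by (auto simp: index_blocks_def)

lemma index_blocks_extend_partition:
  assumes "index_blocks k p" "p' \<in> set (extend_partition p)"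
  shows "index_blocks (Suc k) p'"
proof -
  define q where "q = map (map Suc) p"
  have q_blocks: "\<forall>B\<in>set q. B \<noteq> [] \<and> (\<forall>i\<in>set B. i < Suc k)"
    using assms(1) by (auto simp: q_def index_blocks_def)
  have q_size: "sum_list (map length q) = k"
    using assms(1) by (simp add: q_def index_blocks_def comp_def)
  have "p' = [0] # q \<or> (\<exists>i<length q. p' = q[i := 0 # q!i])"
    using assms(2) by (auto simp: extend_partition_def q_def Let_def)
  then show ?thesis
  proof
    assume "p' = [0] # q"
    then show ?thesis using q_blocks q_size by (auto simp: index_blocks_def)
  next
    assume "\<exists>i<length q. p' = q[i := 0 # q!i]"
    then obtain i where i: "i < length q" and p': "p' = q[i := 0 # q!i]" by blast
    have "set p' \<subseteq> insert (0 # q!i) (set q)" unfolding p' by (rule set_update_subset_insert)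
    then have "\<forall>B\<in>set p'. B \<noteq> [] \<and> (\<forall>i\<in>set B. i < Suc k)" using q_blocks i by fastforce
    moreover have "sum_list (map length p') = Suc k"
      using sum_list_update_Suc[of i "map length q"] i q_size unfolding p' by (simp add: map_update)
    ultimately show ?thesis by (simp add: index_blocks_def)
  qed
qed

lemma index_blocks_fdb_partitions: "p \<in> set (fdb_partitions k) \<Longrightarrow> index_blocks k p"
proof (induction k arbitrary: p)
  case 0
  then show ?case by (simp add: index_blocks_def)
next
  case (Suc k)
  then obtain p0 where "p0 \<in> set (fdb_partitions k)" "p \<in> set (extend_partition p0)" by auto
  then show ?case using Suc.IH index_blocks_extend_partition by blast
qed

lemma partition_weight_pos: "partition_weight p > 0"
proof -
  have "prod_list (map (\<lambda>I. fact (length I) :: real) p) > 0" by (induction p) auto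
  then show ?thesis by (simp add: partition_weight_def)
qed

lemma partition_weight_insert:
  assumes "i < length p"
  shows "partition_weight ((map (map Suc) p)[i := 0 # map Suc (p!i)])
           = partition_weight p * Suc (length (p!i))"
proof -
  define xs where "xs = map (\<lambda>I. fact (length I) :: real) p"
  have i: "i < length xs" and xs_i: "xs!i = fact (length (p!i))" using assms by (simp_all add: xs_def)
  have "prod_list (xs[i := fact (Suc (length (p!i)))]) * xs!i = (prod_list xs * Suc (length (p!i))) * xs!i"
    using prod_list_update[OF i] xs_i by (simp add: algebra_simps)
  then have "prod_list (xs[i := fact (Suc (length (p!i)))]) = prod_list xs * Suc (length (p!i))"
    using xs_i by simp
  moreover have "map (\<lambda>I. fact (length I)) ((map (map Suc) p)[i := 0 # map Suc (p!i)])
      = xs[i := fact (Suc (length (p!i)))]"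
    using assms by (simp add: xs_def map_update comp_def)
  ultimately show ?thesis by (simp add: partition_weight_def xs_def)
qed

lemma sum_list_partition_weight_extend:
  assumes "index_blocks k p"
  shows "sum_list (map partition_weight (extend_partition p)) \<le> partition_weight p * (3 * Suc k)"
proof -
  define j where "j = length p"
  have jk: "j \<le> k" using index_blocks_length_le[OF assms] by (simp add: j_def)
  have "partition_weight ([0] # map (map Suc) p) = Suc j * partition_weight p"
    by (simp add: partition_weight_def comp_def j_def)
  moreover have "(\<Sum>i<j. partition_weight ((map (map Suc) p)[i := 0 # map Suc (p!i)]))
      = (\<Sum>i<j. partition_weight p * Suc (length (p!i)))"
    by (rule sum.cong) (simp_all add: partition_weight_insert j_def)
  ultimately have "sum_list (map partition_weight (extend_partition p))
      = Suc j * partition_weight p + (\<Sum>i<j. partition_weight p * Suc (length (p!i)))"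
    by (simp add: extend_partition_def Let_def j_def interv_sum_list_conv_sum_set_nat atLeast0LessThan)
  also have "(\<Sum>i<j. partition_weight p * Suc (length (p!i))) = partition_weight p * (j + k)"
  proof -
    have "(\<Sum>i<j. length (p!i)) = k"
      using assms unfolding index_blocks_def sum_list_sum_nth by (simp add: j_def atLeast0LessThan)
    then have "(\<Sum>i<j. real (Suc (length (p!i)))) = real j + real k"
      by (simp add: sum.distrib flip: of_nat_sum)
    then show ?thesis by (simp add: sum_distrib_left[symmetric])
  qed
  also have "Suc j * partition_weight p + partition_weight p * (j + k)
      = partition_weight p * (2 * j + 1 + k)" by (simp add: algebra_simps)
  also have "\<dots> \<le> partition_weight p * (3 * Suc k)"
    using jk partition_weight_pos[of p] by (intro mult_left_mono) auto
  finally show ?thesis .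
qed

lemma sum_list_partition_weight_le: "sum_list (map partition_weight (fdb_partitions k)) \<le> 3 ^ k * fact k"
proof (induction k)
  case 0
  then show ?case by (simp add: partition_weight_def)
next
  case (Suc k)
  have "sum_list (map partition_weight (fdb_partitions (Suc k)))
      = sum_list (map (\<lambda>p. sum_list (map partition_weight (extend_partition p))) (fdb_partitions k))"
    by (simp add: sum_list_map_concat o_def)
  also have "\<dots> \<le> sum_list (map (\<lambda>p. partition_weight p * (3 * Suc k)) (fdb_partitions k))"
    by (rule sum_list_mono) (rule sum_list_partition_weight_extend[OF index_blocks_fdb_partitions])
  also have "\<dots> = sum_list (map partition_weight (fdb_partitions k)) * (3 * Suc k)"
    by (rule sum_list_mult_const)
  also have "\<dots> \<le> (3::real) ^ k * fact k * (3 * Suc k)" using Suc by (intro mult_right_mono) auto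
  also have "\<dots> = 3 ^ Suc k * fact (Suc k)" by (simp add: algebra_simps)
  finally show ?case .
qed

lemma norm_higher_deriv_le_deriv_norm:
  fixes f :: "'a::euclidean_space \<Rightarrow> 'b::real_normed_vector"
  assumes "smooth_on_set V f" "open V" "y \<in> V" "length vs = k" "\<forall>v\<in>set vs. norm v \<le> 1"
  shows "norm (higher_deriv k f y vs) \<le> deriv_norm k f y"
proof -
  obtain K where "\<forall>ws. length ws = k \<and> (\<forall>w\<in>set ws. norm w \<le> 1) \<longrightarrow> norm (higher_deriv k f y ws) \<le> K"
    using multilinear_bounded[OF multilinear_higher_deriv[OF assms(1-3)]] by blast
  then have "bdd_above {norm (higher_deriv k f y vs) | vs. length vs = k \<and> (\<forall>v\<in>set vs. norm v \<le> 1)}"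
    unfolding bdd_above_def by blast
  moreover have "norm (higher_deriv k f y vs)
      \<in> {norm (higher_deriv k f y vs) | vs. length vs = k \<and> (\<forall>v\<in>set vs. norm v \<le> 1)}"
    using assms(4,5) by blast
  ultimately show ?thesis unfolding deriv_norm_def by (intro cSup_upper)
qed

lemma deriv_norm_le:
  assumes "\<And>vs. length vs = k \<Longrightarrow> \<forall>v\<in>set vs. norm v \<le> 1 \<Longrightarrow> norm (higher_deriv k f x vs) \<le> C"
  shows "deriv_norm k f x \<le> C"
  unfolding deriv_norm_def
proof (rule cSup_least)
  have "norm (higher_deriv k f x (replicate k 0))
      \<in> {norm (higher_deriv k f x vs) | vs. length vs = k \<and> (\<forall>v\<in>set vs. norm v \<le> 1)}"
    by (intro CollectI exI[of _ "replicate k 0"]) auto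
  then show "{norm (higher_deriv k f x vs) | vs. length vs = k \<and> (\<forall>v\<in>set vs. norm v \<le> 1)} \<noteq> {}"
    by blast
qed (use assms in blast)

lemma norm_higher_deriv_le:
  fixes f :: "'a::euclidean_space \<Rightarrow> 'b::real_normed_vector"
  assumes "smooth_on_set V f" "open V" "y \<in> V" "length ws = k"
  shows "norm (higher_deriv k f y ws) \<le> deriv_norm k f y * prod_list (map norm ws)"
  using multilinear_higher_deriv[OF assms(1-3)] norm_higher_deriv_le_deriv_norm[OF assms(1-3)] assms(4)
  by (rule multilinear_norm_le)

lemma norm_sum_list_le: "norm (sum_list (map F ps)) \<le> sum_list (map (\<lambda>p. norm (F p)) ps)"
  by (induction ps) (auto intro: order.trans[OF norm_triangle_ineq])

lemma prod_list_map_mono: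
  assumes "\<And>B. B \<in> set p \<Longrightarrow> 0 \<le> F B \<and> F B \<le> (G B :: real)"
  shows "prod_list (map F p) \<le> prod_list (map G p)"
  using assms
proof (induction p)
  case (Cons B p)
  have "0 \<le> prod_list (map F p)" using Cons.prems by (intro prod_list_nonneg) auto
  moreover have "0 \<le> F B" "F B \<le> G B" using Cons.prems by auto
  ultimately show ?case using Cons by (simp add: mult_mono')
qed simp

lemma finite_compositions: "finite {as :: nat list. (\<forall>a\<in>set as. 0 < a) \<and> sum_list as = k}"
proof (rule finite_subset[OF _ finite_lists_length_le[of "{..k}" k]])
  show "{as :: nat list. (\<forall>a\<in>set as. 0 < a) \<and> sum_list as = k} \<subseteq> {xs. set xs \<subseteq> {..k} \<and> length xs \<le> k}"
  proof
    fix as :: "nat list" assume "as \<in> {as :: nat list. (\<forall>a\<in>set as. 0 < a) \<and> sum_list as = k}"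
    then have pos: "\<forall>a\<in>set as. 0 < a" and sum: "sum_list as = k" by auto
    have "set as \<subseteq> {..k}" using member_le_sum_list[of _ as] sum by auto
    moreover have "length as \<le> sum_list as" using pos by (induction as) auto
    ultimately show "as \<in> {xs. set xs \<subseteq> {..k} \<and> length xs \<le> k}" using sum by auto
  qed
qed simp

lemma comp_seq_eq_Max:
  assumes "k > 0"
  shows "comp_seq M k = Max ((\<lambda>as. M (length as) * prod_list (map M as))
                              ` {as. (\<forall>a\<in>set as. 0 < a) \<and> sum_list as = k})"
  using assms unfolding comp_seq_def by (simp add: setcompr_eq_image)

lemma le_comp_seq:
  assumes "\<forall>a\<in>set as. 0 < a" "sum_list as = k" "k > 0"
  shows "M (length as) * prod_list (map M as) \<le> comp_seq M k"
  unfolding comp_seq_eq_Max[OF assms(3)] using assms(1,2) by (intro Max_ge finite_imageI finite_compositions) auto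

lemma comp_seq_pos:
  assumes "\<And>k. M k > 0"
  shows "comp_seq M k > 0"
proof (cases "k = 0")
  case False
  then have "M (length [k]) * prod_list (map M [k]) \<le> comp_seq M k" by (intro le_comp_seq) auto
  moreover have "M (length [k]) * prod_list (map M [k]) > 0" using assms by simp
  ultimately show ?thesis by linarith
qed (simp add: comp_seq_def)

lemma index_blocks_le_comp_seq:
  assumes "index_blocks k p" and M_pos: "\<And>k. M k > 0"
  shows "M (length p) * prod_list (map (\<lambda>I. M (length I)) p) \<le> max 1 (M 0) * comp_seq M k"
proof (cases "k = 0")
  case True
  then have "p = []" using assms by (auto simp: index_blocks_def)
  then show ?thesis using True by (simp add: comp_seq_def)
next
  case False
  have "M (length (map length p)) * prod_list (map M (map length p)) \<le> comp_seq M k"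
    using assms False by (intro le_comp_seq) (auto simp: index_blocks_def)
  moreover have "comp_seq M k \<le> max 1 (M 0) * comp_seq M k"
    using comp_seq_pos[of M k] M_pos by (simp add: mult_le_cancel_right1)
  ultimately show ?thesis by (simp add: o_def)
qed

text \<open>The factor \<open>max 1 (1 / M 0)\<close> only accounts for \<open>M\<^sup>\<circ>\<^sub>0 = 1\<close>.\<close>

lemma comp_seq_le_FdB:
  assumes "FdB_property M" "\<And>k. M k > 0"
  obtains C where "C > 0" "\<And>k. comp_seq M k \<le> max 1 (1 / M 0) * (C ^ k * M k)"
proof -
  obtain C where C: "C > 0"
    "\<And>k as. (\<forall>a\<in>set as. 0 < a) \<and> sum_list as = k \<Longrightarrow> M (length as) * prod_list (map M as) \<le> C ^ k * M k"
    using assms(1) unfolding FdB_property_def by blast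
  have "comp_seq M k \<le> max 1 (1 / M 0) * (C ^ k * M k)" for k
  proof (cases "k = 0")
    case True
    have "1 = (1 / M 0) * M 0" using assms(2)[of 0] by simp
    also have "\<dots> \<le> max 1 (1 / M 0) * M 0" using assms(2)[of 0] by (intro mult_right_mono) auto
    finally show ?thesis using True by (simp add: comp_seq_def)
  next
    case False
    then have k: "0 < k" by simp
    have "[k] \<in> {as. (\<forall>a\<in>set as. 0 < a) \<and> sum_list as = k}" using k by simp
    then have "comp_seq M k \<le> C ^ k * M k"
      unfolding comp_seq_eq_Max[OF k] using C(2)
      by (subst Max_le_iff) (use finite_compositions in blast)+
    also have "\<dots> \<le> max 1 (1 / M 0) * (C ^ k * M k)"
      using mult_right_mono[of 1 "max 1 (1 / M 0)" "C ^ k * M k"] C(1) assms(2)[of k] by simp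
    finally show ?thesis .
  qed
  with C(1) show ?thesis using that by blast
qed

section \<open>The composition estimate\<close>

lemma prod_list_map_block_bound:
  "prod_list (map (\<lambda>I. c * (fact (length I) * t ^ length I * N (length I))) p)
     = c ^ length p * t ^ sum_list (map length p) * prod_list (map (\<lambda>I. fact (length I) :: real) p)
       * prod_list (map (\<lambda>I. N (length I)) p)"
  by (induction p) (auto simp: power_add algebra_simps)

lemma prod_list_norm_higher_deriv_blocks_le:
  fixes g :: "'a::euclidean_space \<Rightarrow> 'b::real_normed_vector"
  assumes sg: "smooth_on_set U g" and U: "open U" and x: "x \<in> U"
    and g_bound: "\<And>a. deriv_norm a g x \<le> B * (fact a * \<tau> ^ a * M a)"
    and p: "index_blocks k p" and vs: "length vs = k" "\<forall>v\<in>set vs. norm v \<le> 1"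
  shows "prod_list (map (\<lambda>I. norm (higher_deriv (length I) g x (map ((!) vs) I))) p)
           \<le> B ^ length p * \<tau> ^ k * prod_list (map (\<lambda>I. fact (length I) :: real) p)
             * prod_list (map (\<lambda>I. M (length I)) p)"
proof -
  have "prod_list (map (\<lambda>I. norm (higher_deriv (length I) g x (map ((!) vs) I))) p)
      \<le> prod_list (map (\<lambda>I. B * (fact (length I) * \<tau> ^ length I * M (length I))) p)"
  proof (rule prod_list_map_mono)
    fix I assume "I \<in> set p"
    then have "\<forall>v\<in>set (map ((!) vs) I). norm v \<le> 1" using p vs by (auto simp: index_blocks_def)
    then have "norm (higher_deriv (length I) g x (map ((!) vs) I)) \<le> deriv_norm (length I) g x"
      by (intro norm_higher_deriv_le_deriv_norm[OF sg U x]) auto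
    then show "0 \<le> norm (higher_deriv (length I) g x (map ((!) vs) I)) \<and>
        norm (higher_deriv (length I) g x (map ((!) vs) I)) \<le> B * (fact (length I) * \<tau> ^ length I * M (length I))"
      using g_bound[of "length I"] by auto
  qed
  then show ?thesis using p by (simp add: prod_list_map_block_bound index_blocks_def)
qed

lemma norm_fdb_term_le:
  fixes f :: "'b::euclidean_space \<Rightarrow> 'c::real_normed_vector" and g :: "'a::euclidean_space \<Rightarrow> 'b"
  assumes sf: "smooth_on_set V f" and sg: "smooth_on_set U g" and U: "open U" and V: "open V"
    and x: "x \<in> U" and gx: "g x \<in> V" and M_pos: "\<And>k. M k > 0"
    and g_bound: "\<And>a. deriv_norm a g x \<le> B * (fact a * \<tau> ^ a * M a)"
    and f_bound: "\<And>j. deriv_norm j f (g x) \<le> A * (fact j * \<sigma> ^ j * M j)"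
    and A: "0 \<le> A" and B: "0 \<le> B" and \<sigma>: "0 < \<sigma>" and \<tau>: "0 < \<tau>"
    and p: "index_blocks k p" and vs: "length vs = k" "\<forall>v\<in>set vs. norm v \<le> 1"
  shows "norm (fdb_term f g p x vs)
           \<le> A * max 1 (M 0) * comp_seq M k * (max 1 (\<sigma> * B) * \<tau>) ^ k * partition_weight p"
proof -
  define j where "j = length p"
  define ws where "ws = map (\<lambda>I. higher_deriv (length I) g x (map ((!) vs) I)) p"
  define PF where "PF = prod_list (map (\<lambda>I. fact (length I) :: real) p)"
  define PM where "PM = prod_list (map (\<lambda>I. M (length I)) p)"
  have ws_le: "prod_list (map norm ws) \<le> B ^ j * \<tau> ^ k * PF * PM"
    using prod_list_norm_higher_deriv_blocks_le[OF sg U x g_bound p vs]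
    by (simp add: ws_def j_def PF_def PM_def o_def)
  have M_le: "M j * PM \<le> max 1 (M 0) * comp_seq M k"
    using index_blocks_le_comp_seq[OF p M_pos] by (simp add: j_def PM_def)
  have "(\<sigma> * B) ^ j \<le> max 1 (\<sigma> * B) ^ k"
    using index_blocks_length_le[OF p] \<sigma> B by (intro order.trans[OF power_mono power_increasing]) (auto simp: j_def)
  have "norm (fdb_term f g p x vs) \<le> deriv_norm j f (g x) * prod_list (map norm ws)"
    unfolding fdb_term_def j_def[symmetric] ws_def[symmetric]
    by (rule norm_higher_deriv_le[OF sf V gx]) (simp add: ws_def j_def)
  also have "\<dots> \<le> (A * (fact j * \<sigma> ^ j * M j)) * (B ^ j * \<tau> ^ k * PF * PM)"
    using ws_le f_bound[of j] A \<sigma> M_pos[of j] by (intro mult_mono prod_list_nonneg) auto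
  also have "\<dots> = A * \<tau> ^ k * partition_weight p * ((\<sigma> * B) ^ j * (M j * PM))"
    by (simp add: partition_weight_def PF_def j_def power_mult_distrib mult_ac)
  also have "\<dots> \<le> A * \<tau> ^ k * partition_weight p * (max 1 (\<sigma> * B) ^ k * (max 1 (M 0) * comp_seq M k))"
  proof -
    have "0 \<le> M j * PM" unfolding PM_def using M_pos
      by (intro mult_nonneg_nonneg prod_list_nonneg) (auto intro: less_imp_le)
    then have "(\<sigma> * B) ^ j * (M j * PM) \<le> max 1 (\<sigma> * B) ^ k * (max 1 (M 0) * comp_seq M k)"
      by (intro mult_mono[OF \<open>(\<sigma> * B) ^ j \<le> max 1 (\<sigma> * B) ^ k\<close> M_le]) auto
    then show ?thesis using A \<tau> partition_weight_pos[of p] by (intro mult_left_mono) auto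
  qed
  also have "\<dots> = A * max 1 (M 0) * comp_seq M k * (max 1 (\<sigma> * B) * \<tau>) ^ k * partition_weight p"
    by (simp add: power_mult_distrib mult_ac)
  finally show ?thesis .
qed

lemma deriv_norm_comp_le:
  fixes f :: "'b::euclidean_space \<Rightarrow> 'c::real_normed_vector" and g :: "'a::euclidean_space \<Rightarrow> 'b"
  assumes sf: "smooth_on_set V f" and sg: "smooth_on_set U g" and U: "open U" and V: "open V"
    and gU: "g ` U \<subseteq> V" and x: "x \<in> U" and M_pos: "\<And>k. M k > 0"
    and g_bound: "\<And>a. deriv_norm a g x \<le> B * (fact a * \<tau> ^ a * M a)"
    and f_bound: "\<And>j. deriv_norm j f (g x) \<le> A * (fact j * \<sigma> ^ j * M j)"
    and A: "0 \<le> A" and B: "0 \<le> B" and \<sigma>: "0 < \<sigma>" and \<tau>: "0 < \<tau>"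
  shows "deriv_norm k (f \<circ> g) x \<le> A * max 1 (M 0) * (fact k * (3 * max 1 (\<sigma> * B) * \<tau>) ^ k * comp_seq M k)"
proof -
  let ?C = "A * max 1 (M 0) * comp_seq M k * (max 1 (\<sigma> * B) * \<tau>) ^ k"
  have gx: "g x \<in> V" using gU x by auto
  have C: "0 \<le> ?C" using A \<tau> comp_seq_pos[of M k] M_pos by (simp add: less_imp_le)
  have bound: "norm (higher_deriv k (f \<circ> g) x vs) \<le> ?C * (3 ^ k * fact k)"
    if vs: "length vs = k" "\<forall>v\<in>set vs. norm v \<le> 1" for vs
  proof -
    have "norm (higher_deriv k (f \<circ> g) x vs) = norm (sum_list (map (\<lambda>p. fdb_term f g p x vs) (fdb_partitions k)))"
      by (simp add: higher_deriv_comp[OF sf sg U V gU x vs(1)])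
    also have "\<dots> \<le> sum_list (map (\<lambda>p. norm (fdb_term f g p x vs)) (fdb_partitions k))"
      by (rule norm_sum_list_le)
    also have "\<dots> \<le> sum_list (map (\<lambda>p. ?C * partition_weight p) (fdb_partitions k))"
      by (intro sum_list_mono norm_fdb_term_le[OF sf sg U V x gx M_pos g_bound f_bound A B \<sigma> \<tau>
            index_blocks_fdb_partitions vs])
    also have "\<dots> = ?C * sum_list (map partition_weight (fdb_partitions k))"
      by (rule sum_list_const_mult)
    also have "\<dots> \<le> ?C * (3 ^ k * fact k)"
      using C by (intro mult_left_mono sum_list_partition_weight_le)
    finally show ?thesis .
  qed
  have "deriv_norm k (f \<circ> g) x \<le> ?C * (3 ^ k * fact k)"
    using bound by (rule deriv_norm_le)
  also have "\<dots> = A * max 1 (M 0) * (fact k * (3 * max 1 (\<sigma> * B) * \<tau>) ^ k * comp_seq M k)"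
    by (simp add: power_mult_distrib mult_ac)
  finally show ?thesis .
qed

section \<open>Ultradifferentiable classes\<close>

lemma seminorm_finite_iff:
  assumes "\<And>k. N k > 0" "\<rho> > 0"
  shows "seminorm_finite N K \<rho> f \<longleftrightarrow> (\<exists>A>0. \<forall>x\<in>K. \<forall>k. deriv_norm k f x \<le> A * (fact k * \<rho> ^ k * N k))"
proof -
  have le_iff: "deriv_norm k f x / (fact k * \<rho> ^ k * N k) \<le> A \<longleftrightarrow> deriv_norm k f x \<le> A * (fact k * \<rho> ^ k * N k)"
    for k x A using assms by (simp add: pos_divide_le_eq)
  show ?thesis
  proof
    assume "seminorm_finite N K \<rho> f"
    then obtain A where "\<forall>x\<in>K. \<forall>k. deriv_norm k f x / (fact k * \<rho> ^ k * N k) \<le> A"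
      unfolding seminorm_finite_def bdd_above_def by blast
    then have "\<forall>x\<in>K. \<forall>k. deriv_norm k f x \<le> max A 1 * (fact k * \<rho> ^ k * N k)"
      by (meson le_iff max.cobounded1 order.trans)
    then show "\<exists>A>0. \<forall>x\<in>K. \<forall>k. deriv_norm k f x \<le> A * (fact k * \<rho> ^ k * N k)"
      by (intro exI[of _ "max A 1"]) auto
  next
    assume "\<exists>A>0. \<forall>x\<in>K. \<forall>k. deriv_norm k f x \<le> A * (fact k * \<rho> ^ k * N k)"
    then show "seminorm_finite N K \<rho> f"
      unfolding seminorm_finite_def bdd_above_def using le_iff by blast
  qed
qed

lemma compact_image_smooth_on_set:
  assumes "smooth_on_set U g" "compact K" "K \<subseteq> U"
  shows "compact (g ` K)"
  using assms by (intro compact_continuous_image continuous_on_subset[OF smooth_on_set_imp_continuous_on])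

lemma beurling_class_comp:
  fixes g :: "'a::euclidean_space \<Rightarrow> 'b::euclidean_space" and f :: "'b \<Rightarrow> 'c::euclidean_space"
  assumes M_pos: "\<And>k. M k > 0" and U: "open U" and V: "open V"
    and g: "beurling_class M U V g" and f: "beurling_class M V W f"
  shows "beurling_class (comp_seq M) U W (f \<circ> g)"
proof -
  have gU: "g ` U \<subseteq> V" and sg: "smooth_on_set U g" and fV: "f ` V \<subseteq> W" and sf: "smooth_on_set V f"
    using f g by (auto simp: beurling_class_def)
  have "seminorm_finite (comp_seq M) K \<rho> (f \<circ> g)" if K: "compact K" "K \<subseteq> U" and \<rho>: "\<rho> > 0" for K \<rho>
  proof -
    have "\<exists>B>0. \<forall>x\<in>K. \<forall>a. deriv_norm a g x \<le> B * (fact a * (\<rho> / 3) ^ a * M a)"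
      using g K \<rho> by (simp add: beurling_class_def seminorm_finite_iff[of M, OF M_pos])
    then obtain B where B: "B > 0" "\<forall>x\<in>K. \<forall>a. deriv_norm a g x \<le> B * (fact a * (\<rho> / 3) ^ a * M a)"
      by blast
    have "compact (g ` K)" "g ` K \<subseteq> V" using compact_image_smooth_on_set[OF sg K] K gU by auto
    moreover have "1 / B > 0" using B(1) by simp
    ultimately have "seminorm_finite M (g ` K) (1 / B) f" using f by (simp add: beurling_class_def)
    then obtain A where A: "A > 0" "\<forall>y\<in>g ` K. \<forall>j. deriv_norm j f y \<le> A * (fact j * (1 / B) ^ j * M j)"
      using seminorm_finite_iff[of M, OF M_pos \<open>1 / B > 0\<close>] by blast
    have "\<forall>x\<in>K. \<forall>k. deriv_norm k (f \<circ> g) x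
        \<le> A * max 1 (M 0) * (fact k * (3 * max 1 (1 / B * B) * (\<rho> / 3)) ^ k * comp_seq M k)"
      using A B K \<rho> by (intro ballI allI deriv_norm_comp_le[OF sf sg U V gU _ M_pos]) auto
    then show ?thesis
      using A(1) B(1) \<rho> M_pos[of 0] unfolding seminorm_finite_iff[of "comp_seq M", OF comp_seq_pos[OF M_pos] \<rho>]
      by (intro exI[of _ "A * max 1 (M 0)"]) auto
  qed
  with gU fV smooth_on_set_comp[OF sf sg U V gU] show ?thesis by (auto simp: beurling_class_def)
qed

lemma roumieu_class_comp:
  fixes g :: "'a::euclidean_space \<Rightarrow> 'b::euclidean_space" and f :: "'b \<Rightarrow> 'c::euclidean_space"
  assumes M_pos: "\<And>k. M k > 0" and U: "open U" and V: "open V"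
    and g: "roumieu_class M U V g" and f: "roumieu_class M V W f"
  shows "roumieu_class (comp_seq M) U W (f \<circ> g)"
proof -
  have gU: "g ` U \<subseteq> V" and sg: "smooth_on_set U g" and fV: "f ` V \<subseteq> W" and sf: "smooth_on_set V f"
    using f g by (auto simp: roumieu_class_def)
  have "\<exists>\<rho>>0. seminorm_finite (comp_seq M) K \<rho> (f \<circ> g)" if K: "compact K" "K \<subseteq> U" for K
  proof -
    obtain \<tau> where \<tau>: "\<tau> > 0" "seminorm_finite M K \<tau> g" using g K by (auto simp: roumieu_class_def)
    then obtain B where B: "B > 0" "\<forall>x\<in>K. \<forall>a. deriv_norm a g x \<le> B * (fact a * \<tau> ^ a * M a)"
      using seminorm_finite_iff[of M, OF M_pos] by blast
    have "compact (g ` K)" "g ` K \<subseteq> V" using compact_image_smooth_on_set[OF sg K] K gU by auto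
    then obtain \<sigma> where \<sigma>: "\<sigma> > 0" "seminorm_finite M (g ` K) \<sigma> f" using f by (auto simp: roumieu_class_def)
    then obtain A where A: "A > 0" "\<forall>y\<in>g ` K. \<forall>j. deriv_norm j f y \<le> A * (fact j * \<sigma> ^ j * M j)"
      using seminorm_finite_iff[of M, OF M_pos] by blast
    define \<rho> where "\<rho> = 3 * max 1 (\<sigma> * B) * \<tau>"
    have \<rho>: "\<rho> > 0" using \<tau> by (simp add: \<rho>_def)
    have "\<forall>x\<in>K. \<forall>k. deriv_norm k (f \<circ> g) x \<le> A * max 1 (M 0) * (fact k * \<rho> ^ k * comp_seq M k)"
      unfolding \<rho>_def using A B K \<sigma> \<tau> by (intro ballI allI deriv_norm_comp_le[OF sf sg U V gU _ M_pos]) auto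
    then have "seminorm_finite (comp_seq M) K \<rho> (f \<circ> g)"
      using A(1) M_pos[of 0] unfolding seminorm_finite_iff[of "comp_seq M", OF comp_seq_pos[OF M_pos] \<rho>]
      by (intro exI[of _ "A * max 1 (M 0)"]) auto
    with \<rho> show ?thesis by blast
  qed
  with gU fV smooth_on_set_comp[OF sf sg U V gU] show ?thesis by (auto simp: roumieu_class_def)
qed

lemma seminorm_finite_weight_mono:
  assumes N'_le: "\<And>k. N' k \<le> c * (C ^ k * N k)" and N': "\<And>k. N' k > 0" and N: "\<And>k. N k > 0"
    and "c > 0" "C > 0" "\<rho> > 0" and "seminorm_finite N' K \<rho> h"
  shows "seminorm_finite N K (\<rho> * C) h"
proof -
  obtain A where A: "A > 0" "\<forall>x\<in>K. \<forall>k. deriv_norm k h x \<le> A * (fact k * \<rho> ^ k * N' k)"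
    using assms(7) seminorm_finite_iff[of N', OF N' \<open>\<rho> > 0\<close>] by blast
  have "deriv_norm k h x \<le> (A * c) * (fact k * (\<rho> * C) ^ k * N k)" if "x \<in> K" for x k
  proof -
    have "deriv_norm k h x \<le> A * (fact k * \<rho> ^ k * N' k)" using A that by blast
    also have "\<dots> \<le> A * (fact k * \<rho> ^ k * (c * (C ^ k * N k)))"
      using N'_le A(1) \<open>\<rho> > 0\<close> by (intro mult_left_mono) auto
    also have "\<dots> = (A * c) * (fact k * (\<rho> * C) ^ k * N k)" by (simp add: power_mult_distrib mult_ac)
    finally show ?thesis .
  qed
  then show ?thesis
    using A(1) assms(4) unfolding seminorm_finite_iff[of N, OF N mult_pos_pos[OF assms(6,5)]]
    by (intro exI[of _ "A * c"]) auto
qed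

lemma beurling_class_weight_mono:
  assumes "\<And>k. N' k \<le> c * (C ^ k * N k)" "\<And>k. N' k > 0" "\<And>k. N k > 0" "c > 0" "C > 0"
    and h: "beurling_class N' U V h"
  shows "beurling_class N U V h"
proof -
  have "seminorm_finite N K \<rho> h" if K: "compact K" "K \<subseteq> U" and \<rho>: "\<rho> > 0" for K \<rho>
  proof -
    have \<rho>C: "\<rho> / C > 0" using assms(5) \<rho> by simp
    then have "seminorm_finite N' K (\<rho> / C) h" using h K unfolding beurling_class_def by blast
    then have "seminorm_finite N K (\<rho> / C * C) h"
      by (rule seminorm_finite_weight_mono[of N' c C N, OF assms(1-5) \<rho>C])
    then show ?thesis using assms(5) by simp
  qed
  with h show ?thesis by (simp add: beurling_class_def)
qed

lemma roumieu_class_weight_mono: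
  assumes "\<And>k. N' k \<le> c * (C ^ k * N k)" "\<And>k. N' k > 0" "\<And>k. N k > 0" "c > 0" "C > 0"
    and h: "roumieu_class N' U V h"
  shows "roumieu_class N U V h"
proof -
  have "\<exists>\<rho>>0. seminorm_finite N K \<rho> h" if "compact K" "K \<subseteq> U" for K
  proof -
    have "\<exists>\<rho>>0. seminorm_finite N' K \<rho> h" using h that by (simp add: roumieu_class_def)
    then obtain \<rho> where \<rho>: "\<rho> > 0" "seminorm_finite N' K \<rho> h" by blast
    then have "seminorm_finite N K (\<rho> * C) h"
      by (intro seminorm_finite_weight_mono[of N' c C N, OF assms(1-5)])
    moreover have "\<rho> * C > 0" using \<rho>(1) assms(5) by simp
    ultimately show ?thesis by blast
  qed
  with h show ?thesis by (simp add: roumieu_class_def)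
qed

theorem proposition3p1:
  fixes M :: "nat \<Rightarrow> real"
    and U :: "'a::euclidean_space set" and V :: "'b::euclidean_space set" and W :: "'c::euclidean_space set"
  assumes M_pos: "\<And>k. M k > 0"
    and U_open: "open U" and V_open: "open V" and W_open: "open W"
  shows "(\<forall>(g::'a \<Rightarrow> 'b) (f::'b \<Rightarrow> 'c). beurling_class M U V g \<and> beurling_class M V W f
            \<longrightarrow> beurling_class (comp_seq M) U W (f \<circ> g))
       \<and> (\<forall>(g::'a \<Rightarrow> 'b) (f::'b \<Rightarrow> 'c). roumieu_class M U V g \<and> roumieu_class M V W f
            \<longrightarrow> roumieu_class (comp_seq M) U W (f \<circ> g))
       \<and> (FdB_property M \<longrightarrow>
            (\<forall>(g::'a \<Rightarrow> 'b) (f::'b \<Rightarrow> 'c). beurling_class M U V g \<and> beurling_class M V W f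
              \<longrightarrow> beurling_class M U W (f \<circ> g))
          \<and> (\<forall>(g::'a \<Rightarrow> 'b) (f::'b \<Rightarrow> 'c). roumieu_class M U V g \<and> roumieu_class M V W f
              \<longrightarrow> roumieu_class M U W (f \<circ> g)))"
proof -
  have beurling_FdB: "beurling_class M U W h"
    if FdB: "FdB_property M" and h: "beurling_class (comp_seq M) U W h" for h :: "'a \<Rightarrow> 'c"
  proof -
    obtain C where C: "C > 0" "\<And>k. comp_seq M k \<le> max 1 (1 / M 0) * (C ^ k * M k)"
      using comp_seq_le_FdB[OF FdB M_pos] by blast
    show ?thesis
      by (rule beurling_class_weight_mono[of "comp_seq M" "max 1 (1 / M 0)" C M,
            OF C(2) comp_seq_pos[OF M_pos] M_pos _ C(1) h]) simp
  qed
  have roumieu_FdB: "roumieu_class M U W h"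
    if FdB: "FdB_property M" and h: "roumieu_class (comp_seq M) U W h" for h :: "'a \<Rightarrow> 'c"
  proof -
    obtain C where C: "C > 0" "\<And>k. comp_seq M k \<le> max 1 (1 / M 0) * (C ^ k * M k)"
      using comp_seq_le_FdB[OF FdB M_pos] by blast
    show ?thesis
      by (rule roumieu_class_weight_mono[of "comp_seq M" "max 1 (1 / M 0)" C M,
            OF C(2) comp_seq_pos[OF M_pos] M_pos _ C(1) h]) simp
  qed
  show ?thesis
    by (intro conjI allI impI; elim conjE)
      (blast intro: beurling_class_comp[where M = M, OF M_pos U_open V_open] roumieu_class_comp[where M = M, OF M_pos U_open V_open]
         beurling_FdB roumieu_FdB)+
qed

end
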